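(* For every $a\in(0,1)$, the map $(r,z)\mapsto H(r,z)$ is Lipschitz from $\mathcal A_2(a)\times\mathbb S^{n-1}$, equipped with $\|\cdot\|_2\times|\cdot|$, to $\mathbb R^n$.
   Context: $n\ge2$; $\mathbb S^{n-1}$ with surface measure $\sigma$, $\omega_n=\sigma(\mathbb S^{n-1})$; $\|\cdot\|_2$ the $L^2(\sigma)$ norm; $|\cdot|$ Euclidean norm; $C_+(\mathbb S^{n-1})$ strictly positive continuous functions. $(f\star g)(z):=\omega_n^{-1}\int f(\theta)g(\langle z,\theta\rangle)d\sigma(\theta)$. Fix $\eta_0\in(0,1)$ and $g(t)=\frac{c}{\omega_{n-1}}\eta_0^{-(n-1)}\phi(1-\frac{1-t}{\eta_0^2})$, $t\in[-1,1]$, with $\phi\ge0$ continuous, vanishing outside $[-1,1]$, $C^3$ on $[-1,1]$, $\|\phi\|_\infty=1$, $c>0$ with $1\star g\equiv1$; $\widetilde r:=r\star g$. Fix a locally Lipschitz $\alpha:(0,\infty)\times\mathbb S^{n-1}\to[0,\infty)$ with $0\le\alpha(\ell,z)<\ell$; $H(r,z):=\alpha(\widetilde r(z),z)z$. $\mathcal A_2(a):=\{r\in C_+:\inf r\ge a,\|r\|_2\le a^{-1}\}$. *)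

theory Defs
  imports "HOL-Analysis.Analysis"
begin

text \<open>Surface measure on the unit sphere of a Euclidean space, defined as the
cone measure: sigma(A) = n * lambda({t x : 0 < t < 1, x in A}), i.e. n times the
push-forward of Lebesgue measure on the punctured unit ball under x / |x|.\<close>
definition sph_measure :: "'a::euclidean_space measure" where
  "sph_measure = scale_measure (of_nat DIM('a))
     (distr (restrict_space lborel (ball 0 1 - {0})) (restrict_space borel (sphere 0 1))
        (\<lambda>x. x /\<^sub>R norm x))"

definition omega_sph :: "'a::euclidean_space itself \<Rightarrow> real" where
  "omega_sph _ = measure (sph_measure :: 'a measure) (sphere 0 1)"

text \<open>Area of the unit sphere S^{m-1} in R^m, as a function of the natural number m
(used for omega_{n-1}, which lives in a different dimension).\<close>
definition sphere_area :: "nat \<Rightarrow> real" where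
  "sphere_area m = 2 * pi powr (real m / 2) / Gamma (real m / 2)"

definition l2norm_sph :: "('a::euclidean_space \<Rightarrow> real) \<Rightarrow> real" where
  "l2norm_sph r = sqrt (integral\<^sup>L (sph_measure :: 'a measure) (\<lambda>\<theta>. (r \<theta>)\<^sup>2))"

definition sph_star :: "('a::euclidean_space \<Rightarrow> real) \<Rightarrow> (real \<Rightarrow> real) \<Rightarrow> 'a \<Rightarrow> real" where
  "sph_star f g z = (1 / omega_sph TYPE('a)) *
      integral\<^sup>L (sph_measure :: 'a measure) (\<lambda>\<theta>. f \<theta> * g (z \<bullet> \<theta>))"

definition locally_lipschitz_on :: "'a::metric_space set \<Rightarrow> ('a \<Rightarrow> 'b::metric_space) \<Rightarrow> bool" where
  "locally_lipschitz_on D f \<longleftrightarrow> (\<forall>p\<in>D. \<exists>e>0. \<exists>L. L-lipschitz_on (cball p e \<inter> D) f)"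

definition Cpos_sph :: "('a::euclidean_space \<Rightarrow> real) set" where
  "Cpos_sph = {r. continuous_on (sphere 0 1) r \<and> (\<forall>z\<in>sphere 0 1. r z > 0)}"

definition A2 :: "real \<Rightarrow> ('a::euclidean_space \<Rightarrow> real) set" where
  "A2 a = {r \<in> Cpos_sph. (\<forall>z\<in>sphere 0 1. a \<le> r z) \<and> l2norm_sph r \<le> 1 / a}"

definition C3_on_interval :: "(real \<Rightarrow> real) \<Rightarrow> bool" where
  "C3_on_interval \<phi> \<longleftrightarrow> (\<exists>\<phi>1 \<phi>2 \<phi>3.
     (\<forall>t\<in>{-1..1}. (\<phi> has_real_derivative \<phi>1 t) (at t within {-1..1})) \<and>
     (\<forall>t\<in>{-1..1}. (\<phi>1 has_real_derivative \<phi>2 t) (at t within {-1..1})) \<and>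
     (\<forall>t\<in>{-1..1}. (\<phi>2 has_real_derivative \<phi>3 t) (at t within {-1..1})) \<and>
     continuous_on {-1..1} \<phi>3)"

end

theory Submission
  imports Defs
begin

(*
  The kernel g is a rescaled C^3 bump, hence bounded and Lipschitz on [-1,1]. By Cauchy-Schwarz
  |r1 \<star> g (z) - r2 \<star> g (z)| \<le> sup g * \<omega>^(-1/2) * ||r1 - r2||_2 and
  |r \<star> g (z1) - r \<star> g (z2)| \<le> Lip g * \<omega>^(-1/2) * ||r||_2 * |z1 - z2|, where ||r||_2 \<le> 1/a on A_2(a);
  and g \<ge> 0 with 1 \<star> g = 1 gives a \<le> r \<star> g, while the first estimate with r2 = 0 bounds r \<star> g
  by some M. So (r, z) \<mapsto> (r \<star> g (z), z) is Lipschitz into the compact set [a, M] \<times> S^(n-1),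
  on which the locally Lipschitz \<alpha> is Lipschitz and bounded by M; multiplying by the unit
  vector z keeps the map Lipschitz.
*)

section \<open>Averages on a finite measure space\<close>

lemma (in finite_measure) integral_abs_le_sqrt_measure_mult:
  fixes f :: "'a \<Rightarrow> real"
  assumes f: "integrable M f" and f2: "integrable M (\<lambda>x. (f x)\<^sup>2)"
  shows "(\<integral>x. \<bar>f x\<bar> \<partial>M) \<le> sqrt (measure M (space M)) * sqrt (\<integral>x. (f x)\<^sup>2 \<partial>M)"
proof -
  define w where "w = measure M (space M)"
  define c where "c = (\<integral>x. \<bar>f x\<bar> \<partial>M)"
  define q where "q = (\<integral>x. (f x)\<^sup>2 \<partial>M)"
  \<comment> \<open>Cauchy-Schwarz against the constant 1, via the nonnegative integral of (w |f| - c)^2.\<close>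
  have "(\<lambda>x. (w * \<bar>f x\<bar> - c)\<^sup>2) = (\<lambda>x. w\<^sup>2 * (f x)\<^sup>2 - (2 * w * c) * \<bar>f x\<bar> + c\<^sup>2)"
    by (auto simp: power2_eq_square algebra_simps)
  then have "(\<integral>x. (w * \<bar>f x\<bar> - c)\<^sup>2 \<partial>M) = w\<^sup>2 * q - (2 * w * c) * c + w * c\<^sup>2"
    using f f2 by (simp add: w_def c_def q_def)
  also have "\<dots> = w * (w * q - c\<^sup>2)"
    by (simp add: power2_eq_square algebra_simps)
  finally have "(\<integral>x. (w * \<bar>f x\<bar> - c)\<^sup>2 \<partial>M) = w * (w * q - c\<^sup>2)" .
  moreover have "0 \<le> (\<integral>x. (w * \<bar>f x\<bar> - c)\<^sup>2 \<partial>M)"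
    by simp
  ultimately have "c\<^sup>2 \<le> w * q \<or> w = 0"
    using measure_nonneg[of M "space M"] by (auto simp: zero_le_mult_iff w_def)
  moreover have "c = 0" if "w = 0"
  proof -
    have "space M \<in> null_sets M"
      using that emeasure_eq_measure[of "space M"] by (simp add: w_def null_sets_def)
    then have "AE x in M. \<bar>f x\<bar> = 0"
      by (rule AE_I') auto
    from integral_eq_zero_AE[OF this] show ?thesis
      by (simp add: c_def)
  qed
  ultimately have "c\<^sup>2 \<le> w * q"
    by auto
  then have "sqrt (c\<^sup>2) \<le> sqrt (w * q)"
    by (rule real_sqrt_le_mono)
  moreover have "c \<ge> 0"
    unfolding c_def by simp
  ultimately show ?thesis
    unfolding c_def w_def q_def by (simp only: real_sqrt_mult real_sqrt_abs abs_of_nonneg)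
qed

section \<open>The surface measure\<close>

lemma space_sph_measure [simp]: "space (sph_measure :: 'a::euclidean_space measure) = sphere 0 1"
  by (simp add: sph_measure_def space_scale_measure)

lemma sets_sph_measure:
  "sets (sph_measure :: 'a::euclidean_space measure) = sets (restrict_space borel (sphere 0 1))"
  by (simp add: sph_measure_def)

lemma emeasure_sph_measure_sphere:
  "emeasure (sph_measure :: 'a::euclidean_space measure) (sphere 0 1)
     = of_nat DIM('a) * emeasure lborel (ball (0::'a) 1)"
proof -
  let ?P = "ball (0::'a) 1 - {0}"
  have "(\<lambda>x. x /\<^sub>R norm x) \<in> restrict_space lborel ?P \<rightarrow>\<^sub>M restrict_space borel (sphere (0::'a) 1)"
  proof (rule measurable_restrict_space2)
    show "(\<lambda>x. x /\<^sub>R norm x) \<in> space (restrict_space lborel ?P) \<rightarrow> sphere 0 1"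
      by (auto simp: space_restrict_space)
    have "continuous_on ?P (\<lambda>x::'a. x /\<^sub>R norm x)"
      by (intro continuous_intros) auto
    then show "(\<lambda>x. x /\<^sub>R norm x) \<in> borel_measurable (restrict_space lborel ?P)"
      unfolding measurable_cong_sets[OF sets_restrict_space_cong[OF sets_lborel] refl]
      by (rule borel_measurable_continuous_on_restrict)
  qed
  from emeasure_distr[OF this sets.top]
  have "emeasure (sph_measure :: 'a measure) (sphere 0 1)
      = of_nat DIM('a) * emeasure (restrict_space lborel ?P) ?P"
    by (simp add: sph_measure_def space_restrict_space Int_absorb1 subset_eq)
  also have "emeasure (restrict_space lborel ?P) ?P = emeasure lborel ?P"
    by (simp add: emeasure_restrict_space)
  also have "emeasure lborel ?P = emeasure lborel (ball (0::'a) 1)"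
    by (rule emeasure_Diff_null_set) auto
  finally show ?thesis .
qed

lemma finite_measure_sph_measure: "finite_measure (sph_measure :: 'a::euclidean_space measure)"
  by (rule finite_measureI)
    (use emeasure_lborel_ball_finite[of "0::'a" 1] in \<open>simp add: emeasure_sph_measure_sphere ennreal_mult_eq_top_iff\<close>)

lemma omega_sph_eq: "omega_sph TYPE('a::euclidean_space) = DIM('a) * measure lborel (ball (0::'a) 1)"
  unfolding omega_sph_def measure_def emeasure_sph_measure_sphere
  by (simp only: enn2real_mult enn2real_of_nat)

lemma omega_sph_pos: "omega_sph TYPE('a::euclidean_space) > 0"
  by (simp add: omega_sph_eq content_ball_pos)

lemma borel_measurable_sph_measure_continuous_on:
  "continuous_on (sphere 0 1) f \<Longrightarrow> f \<in> borel_measurable (sph_measure :: 'a::euclidean_space measure)"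
  unfolding measurable_cong_sets[OF sets_sph_measure refl]
  by (rule borel_measurable_continuous_on_restrict)

lemma integrable_sph_measure_continuous_on:
  fixes f :: "'a::euclidean_space \<Rightarrow> real"
  assumes "continuous_on (sphere 0 1) f"
  shows "integrable sph_measure f"
proof -
  interpret finite_measure "sph_measure :: 'a measure"
    by (rule finite_measure_sph_measure)
  have "bounded (f ` sphere 0 1)"
    by (intro compact_imp_bounded compact_continuous_image assms compact_sphere)
  then obtain B where "\<forall>\<theta>\<in>sphere 0 1. norm (f \<theta>) \<le> B"
    by (auto simp: bounded_iff)
  then show ?thesis
    by (intro integrable_const_bound[where B = B] AE_I2 borel_measurable_sph_measure_continuous_on assms) auto
qed

lemma sph_integral_abs_le_l2norm:
  fixes f :: "'a::euclidean_space \<Rightarrow> real"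
  assumes "continuous_on (sphere 0 1) f"
  shows "(\<integral>\<theta>. \<bar>f \<theta>\<bar> \<partial>sph_measure) \<le> sqrt (omega_sph TYPE('a)) * l2norm_sph f"
proof -
  have "integrable sph_measure f" "integrable sph_measure (\<lambda>\<theta>. (f \<theta>)\<^sup>2)"
    using assms continuous_on_power[OF assms] by (auto intro: integrable_sph_measure_continuous_on)
  from finite_measure.integral_abs_le_sqrt_measure_mult[OF finite_measure_sph_measure this]
  show ?thesis
    by (simp add: omega_sph_def l2norm_sph_def)
qed

section \<open>Estimates for the spherical convolution\<close>

lemma inner_sphere_in_interval:
  fixes z \<theta> :: "'a::real_inner"
  assumes "z \<in> sphere 0 1" "\<theta> \<in> sphere 0 1"
  shows "z \<bullet> \<theta> \<in> {-1..1}"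
  using Cauchy_Schwarz_ineq2[of z \<theta>] assms by (auto simp: abs_le_iff)

lemma continuous_on_sphere_compose_inner:
  fixes z :: "'a::real_inner"
  assumes "continuous_on {-1..1} g" "z \<in> sphere 0 1"
  shows "continuous_on (sphere 0 1) (\<lambda>\<theta>. g (z \<bullet> \<theta>))"
  by (rule continuous_on_compose2[OF assms(1) continuous_on_inner[OF continuous_on_const continuous_on_id]])
    (auto intro: inner_sphere_in_interval assms(2))

lemma abs_sph_mean_mult_le:
  fixes r h :: "'a::euclidean_space \<Rightarrow> real"
  assumes r: "continuous_on (sphere 0 1) r" and h: "continuous_on (sphere 0 1) h"
    and h_le: "\<forall>\<theta>\<in>sphere 0 1. \<bar>h \<theta>\<bar> \<le> B"
  shows "\<bar>1 / omega_sph TYPE('a) * (\<integral>\<theta>. r \<theta> * h \<theta> \<partial>sph_measure)\<bar>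
           \<le> B / sqrt (omega_sph TYPE('a)) * l2norm_sph r"
proof -
  let ?\<omega> = "omega_sph TYPE('a)"
  obtain b :: 'a where "b \<in> Basis"
    using nonempty_Basis by blast
  then have "0 \<le> B"
    using h_le by (metis abs_ge_zero norm_Basis mem_sphere_0 order_trans)
  have "\<bar>\<integral>\<theta>. r \<theta> * h \<theta> \<partial>sph_measure\<bar> \<le> (\<integral>\<theta>. B * \<bar>r \<theta>\<bar> \<partial>sph_measure)"
    using r h h_le
    by (intro integral_abs_bound_integral integrable_sph_measure_continuous_on continuous_intros)
      (auto simp: abs_mult mult.commute[of B] intro: mult_left_mono)
  also have "\<dots> \<le> B * (sqrt ?\<omega> * l2norm_sph r)"
    using sph_integral_abs_le_l2norm[OF r] \<open>0 \<le> B\<close> by (simp add: mult_left_mono)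
  finally have "\<bar>\<integral>\<theta>. r \<theta> * h \<theta> \<partial>sph_measure\<bar> / ?\<omega> \<le> B * (sqrt ?\<omega> * l2norm_sph r) / ?\<omega>"
    using omega_sph_pos[where 'a='a] by (simp add: divide_right_mono)
  also have "\<dots> = B / sqrt ?\<omega> * l2norm_sph r"
    using sqrt_divide_self_eq[of ?\<omega>] omega_sph_pos[where 'a='a]
    by (simp add: divide_inverse mult_ac)
  finally show ?thesis
    using omega_sph_pos[where 'a='a] by (simp add: abs_mult)
qed

context
  fixes g :: "real \<Rightarrow> real"
  assumes g_cont: "continuous_on {-1..1} g"
begin

lemma integrable_sph_measure_kernel:
  fixes r :: "'a::euclidean_space \<Rightarrow> real"
  assumes "continuous_on (sphere 0 1) r" "z \<in> sphere 0 1"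
  shows "integrable sph_measure (\<lambda>\<theta>. r \<theta> * g (z \<bullet> \<theta>))"
  by (intro integrable_sph_measure_continuous_on continuous_on_mult assms
      continuous_on_sphere_compose_inner[OF g_cont])

lemma sph_star_diff_left:
  fixes r1 r2 :: "'a::euclidean_space \<Rightarrow> real"
  assumes "continuous_on (sphere 0 1) r1" "continuous_on (sphere 0 1) r2" "z \<in> sphere 0 1"
  shows "sph_star r1 g z - sph_star r2 g z = sph_star (\<lambda>\<theta>. r1 \<theta> - r2 \<theta>) g z"
  using integrable_sph_measure_kernel[OF assms(1,3)] integrable_sph_measure_kernel[OF assms(2,3)]
  by (simp add: sph_star_def left_diff_distrib right_diff_distrib)

lemma sph_star_diff_right:
  fixes r :: "'a::euclidean_space \<Rightarrow> real"
  assumes "continuous_on (sphere 0 1) r" "z1 \<in> sphere 0 1" "z2 \<in> sphere 0 1"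
  shows "sph_star r g z1 - sph_star r g z2
           = 1 / omega_sph TYPE('a) * (\<integral>\<theta>. r \<theta> * (g (z1 \<bullet> \<theta>) - g (z2 \<bullet> \<theta>)) \<partial>sph_measure)"
  using integrable_sph_measure_kernel[OF assms(1,2)] integrable_sph_measure_kernel[OF assms(1,3)]
  by (simp add: sph_star_def right_diff_distrib)

lemma abs_sph_star_le:
  fixes r :: "'a::euclidean_space \<Rightarrow> real"
  assumes r: "continuous_on (sphere 0 1) r" and z: "z \<in> sphere 0 1"
    and g_le: "\<forall>t\<in>{-1..1}. \<bar>g t\<bar> \<le> B"
  shows "\<bar>sph_star r g z\<bar> \<le> B / sqrt (omega_sph TYPE('a)) * l2norm_sph r"
  unfolding sph_star_def
  using g_le inner_sphere_in_interval[OF z]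
  by (intro abs_sph_mean_mult_le r continuous_on_sphere_compose_inner[OF g_cont z]) auto

lemma sph_star_ge:
  fixes r :: "'a::euclidean_space \<Rightarrow> real"
  assumes g_nonneg: "\<forall>t\<in>{-1..1}. 0 \<le> g t" and normalized: "sph_star (\<lambda>_. 1) g z = 1"
    and r: "continuous_on (sphere 0 1) r" "\<forall>\<theta>\<in>sphere 0 1. m \<le> r \<theta>" and z: "z \<in> sphere 0 1"
  shows "m \<le> sph_star r g z"
proof -
  have "sph_star (\<lambda>_. m) g z = m"
    using normalized by (simp add: sph_star_def)
  moreover have "0 \<le> sph_star (\<lambda>\<theta>. r \<theta> - m) g z"
    unfolding sph_star_def
    using r(2) g_nonneg inner_sphere_in_interval[OF z] omega_sph_pos[where 'a='a]
    by (intro mult_nonneg_nonneg integral_nonneg_AE AE_I2) auto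
  ultimately show ?thesis
    using sph_star_diff_left[OF r(1) continuous_on_const[of _ m] z] by simp
qed

end

lemma sph_star_lipschitz_in_point:
  fixes r :: "'a::euclidean_space \<Rightarrow> real"
  assumes g: "L-lipschitz_on {-1..1} g" and r: "continuous_on (sphere 0 1) r"
    and z1: "z1 \<in> sphere 0 1" and z2: "z2 \<in> sphere 0 1"
  shows "\<bar>sph_star r g z1 - sph_star r g z2\<bar>
           \<le> L * norm (z1 - z2) / sqrt (omega_sph TYPE('a)) * l2norm_sph r"
proof -
  have g_cont: "continuous_on {-1..1} g"
    using g by (rule lipschitz_on_continuous_on)
  have "\<bar>g (z1 \<bullet> \<theta>) - g (z2 \<bullet> \<theta>)\<bar> \<le> L * norm (z1 - z2)" if "\<theta> \<in> sphere 0 1" for \<theta>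
  proof -
    have "\<bar>g (z1 \<bullet> \<theta>) - g (z2 \<bullet> \<theta>)\<bar> \<le> L * \<bar>z1 \<bullet> \<theta> - z2 \<bullet> \<theta>\<bar>"
      using lipschitz_onD[OF g inner_sphere_in_interval[OF z1 that] inner_sphere_in_interval[OF z2 that]]
      by (simp add: dist_real_def)
    also have "\<bar>z1 \<bullet> \<theta> - z2 \<bullet> \<theta>\<bar> \<le> norm (z1 - z2)"
      using Cauchy_Schwarz_ineq2[of "z1 - z2" \<theta>] that by (simp add: inner_diff_left)
    finally show ?thesis
      using lipschitz_on_nonneg[OF g] by (simp add: mult_left_mono order_trans)
  qed
  then show ?thesis
    unfolding sph_star_diff_right[OF g_cont r z1 z2]
    by (intro abs_sph_mean_mult_le r continuous_intros
        continuous_on_sphere_compose_inner[OF g_cont z1] continuous_on_sphere_compose_inner[OF g_cont z2]) auto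
qed

lemma A2_memD:
  assumes "r \<in> A2 a"
  shows "continuous_on (sphere 0 1) r" "\<forall>\<theta>\<in>sphere 0 1. a \<le> r \<theta>" "l2norm_sph r \<le> 1 / a"
  using assms by (auto simp: A2_def Cpos_sph_def)

lemma sph_star_A2_bounds:
  fixes r :: "'a::euclidean_space \<Rightarrow> real"
  assumes a: "0 < a" and g: "continuous_on {-1..1} g" "\<forall>t\<in>{-1..1}. 0 \<le> g t \<and> g t \<le> B"
    and normalized: "sph_star (\<lambda>_. 1) g z = 1" and r: "r \<in> A2 a" and z: "z \<in> sphere 0 1"
  shows "sph_star r g z \<in> {a .. B / (a * sqrt (omega_sph TYPE('a)))}"
  unfolding atLeastAtMost_iff
proof
  show "a \<le> sph_star r g z"
    using g r z normalized by (intro sph_star_ge A2_memD) auto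
  have "0 \<le> B"
    using g(2) by force
  have "sph_star r g z \<le> B / sqrt (omega_sph TYPE('a)) * l2norm_sph r"
    using abs_sph_star_le[OF g(1) A2_memD(1)[OF r] z] g(2) by fastforce
  also have "\<dots> \<le> B / sqrt (omega_sph TYPE('a)) * (1 / a)"
    using A2_memD(3)[OF r] \<open>0 \<le> B\<close> omega_sph_pos[where 'a='a] by (intro mult_left_mono) auto
  finally show "sph_star r g z \<le> B / (a * sqrt (omega_sph TYPE('a)))"
    by (simp add: mult.commute)
qed

lemma sph_star_A2_lipschitz:
  fixes r1 r2 :: "'a::euclidean_space \<Rightarrow> real"
  assumes a: "0 < a" and g: "Lg-lipschitz_on {-1..1} g" "\<forall>t\<in>{-1..1}. \<bar>g t\<bar> \<le> B"
    and r1: "r1 \<in> A2 a" and r2: "r2 \<in> A2 a" and z1: "z1 \<in> sphere 0 1" and z2: "z2 \<in> sphere 0 1"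
  shows "\<bar>sph_star r1 g z1 - sph_star r2 g z2\<bar>
           \<le> (B + Lg / a) / sqrt (omega_sph TYPE('a))
               * (l2norm_sph (\<lambda>\<theta>. r1 \<theta> - r2 \<theta>) + norm (z1 - z2))"
proof -
  let ?s = "sqrt (omega_sph TYPE('a))" and ?N = "l2norm_sph (\<lambda>\<theta>. r1 \<theta> - r2 \<theta>)" and ?d = "norm (z1 - z2)"
  have g_cont: "continuous_on {-1..1} g"
    using g(1) by (rule lipschitz_on_continuous_on)
  have "0 \<le> B" "0 \<le> Lg" "0 < ?s" "0 \<le> ?N"
    using g(2) lipschitz_on_nonneg[OF g(1)] omega_sph_pos[where 'a='a]
    by (force simp: l2norm_sph_def)+
  have "\<bar>sph_star r1 g z1 - sph_star r2 g z1\<bar> = \<bar>sph_star (\<lambda>\<theta>. r1 \<theta> - r2 \<theta>) g z1\<bar>"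
    using sph_star_diff_left[OF g_cont A2_memD(1)[OF r1] A2_memD(1)[OF r2] z1] by simp
  also have "\<dots> \<le> B / ?s * ?N"
    by (rule abs_sph_star_le[OF g_cont continuous_on_diff[OF A2_memD(1)[OF r1] A2_memD(1)[OF r2]] z1 g(2)])
  finally have "\<bar>sph_star r1 g z1 - sph_star r2 g z1\<bar> \<le> B / ?s * ?N" .
  moreover have "\<bar>sph_star r2 g z1 - sph_star r2 g z2\<bar> \<le> Lg * ?d / ?s * l2norm_sph r2"
    by (rule sph_star_lipschitz_in_point[OF g(1) A2_memD(1)[OF r2] z1 z2])
  moreover have "Lg * ?d / ?s * l2norm_sph r2 \<le> Lg * ?d / ?s * (1 / a)"
    using A2_memD(3)[OF r2] \<open>0 \<le> Lg\<close> \<open>0 < ?s\<close> by (intro mult_left_mono) auto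
  moreover have "B / ?s * ?N + Lg * ?d / ?s * (1 / a) \<le> (B + Lg / a) / ?s * (?N + ?d)"
    using \<open>0 \<le> B\<close> \<open>0 \<le> Lg\<close> \<open>0 < ?s\<close> \<open>0 \<le> ?N\<close> a
    by (simp add: field_simps add_mono mult_left_mono)
  ultimately show ?thesis
    by linarith
qed

section \<open>Regularity of the kernel\<close>

lemma sphere_area_pos: "0 < m \<Longrightarrow> 0 < sphere_area m"
  unfolding sphere_area_def by (intro divide_pos_pos Gamma_real_pos) auto

lemma C3_on_interval_imp_lipschitz:
  assumes "C3_on_interval \<phi>"
  obtains L where "L-lipschitz_on {-1..1} \<phi>"
proof -
  from assms obtain \<phi>1 \<phi>2 where
    d1: "\<forall>t\<in>{-1..1}. (\<phi> has_real_derivative \<phi>1 t) (at t within {-1..1})" and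
    d2: "\<forall>t\<in>{-1..1}. (\<phi>1 has_real_derivative \<phi>2 t) (at t within {-1..1})"
    unfolding C3_on_interval_def by blast
  have "continuous_on {-1..1} \<phi>1"
    using d2 by (intro DERIV_continuous_on) blast
  then have "bounded (\<phi>1 ` {-1..1})"
    by (intro compact_imp_bounded compact_continuous_image compact_Icc)
  then obtain B where B: "\<forall>t\<in>{-1..1}. norm (\<phi>1 t) \<le> B"
    by (auto simp: bounded_iff)
  have "B-lipschitz_on {-1..1} \<phi>"
  proof (rule lipschitz_onI)
    show "0 \<le> B"
      using B by force
    show "dist (\<phi> s) (\<phi> t) \<le> B * dist s t" if "s \<in> {-1..1}" "t \<in> {-1..1}" for s t
      using field_differentiable_bound[of "{-1..1::real}" \<phi> \<phi>1 B s t] d1 B that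
      by (simp add: dist_real_def)
  qed
  then show ?thesis
    by (rule that)
qed

lemma lipschitz_on_extend_by_zero_below:
  fixes \<phi> :: "real \<Rightarrow> real"
  assumes lip: "L-lipschitz_on {-1..1} \<phi>" and cont: "continuous_on UNIV \<phi>"
    and vanish: "\<forall>t < -1. \<phi> t = 0" and b: "b \<le> -1"
  shows "L-lipschitz_on {b..1} \<phi>"
proof -
  have "(\<phi> \<longlongrightarrow> 0) (at_left (-1))"
    using eventually_at_left_real[of "-2" "-1::real"] vanish
    by (intro tendsto_eventually) (auto elim!: eventually_mono)
  moreover have "(\<phi> \<longlongrightarrow> \<phi> (-1)) (at_left (-1))"
    using cont by (simp add: continuous_on_def filterlim_at_split)
  ultimately have "\<phi> (-1) = 0"
    using tendsto_unique trivial_limit_at_left_real by blast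
  have "L-lipschitz_on {b..-1} (\<lambda>_. 0::real)"
    using lipschitz_on_nonneg[OF lip] by (intro lipschitz_on_mono[OF lipschitz_on_constant]) auto
  from lipschitz_on_concat[OF this lip] \<open>\<phi> (-1) = 0\<close>
  have "L-lipschitz_on {b..1} (\<lambda>t. if t \<le> -1 then 0 else \<phi> t)"
    by simp
  moreover have "(if t \<le> -1 then 0 else \<phi> t) = \<phi> t" for t
    using vanish \<open>\<phi> (-1) = 0\<close> by (cases "t < -1") auto
  ultimately show ?thesis
    by simp
qed

lemma lipschitz_on_rescaled_kernel:
  fixes \<phi> g :: "real \<Rightarrow> real"
  assumes g: "\<forall>t\<in>{-1..1}. g t = K * \<phi> (1 - (1 - t) / \<eta>\<^sup>2)" and K: "0 \<le> K" and \<eta>: "0 < \<eta>"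
    and lip: "L-lipschitz_on {1 - 2 / \<eta>\<^sup>2..1} \<phi>"
  shows "(K * L / \<eta>\<^sup>2)-lipschitz_on {-1..1} g"
proof (rule lipschitz_onI)
  show "0 \<le> K * L / \<eta>\<^sup>2"
    using K lipschitz_on_nonneg[OF lip] by simp
  fix s t :: real
  assume s: "s \<in> {-1..1}" and t: "t \<in> {-1..1}"
  have range: "1 - (1 - u) / \<eta>\<^sup>2 \<in> {1 - 2 / \<eta>\<^sup>2..1}" if "u \<in> {-1..1}" for u
    using that \<eta> by (auto simp: divide_right_mono)
  have "dist (g s) (g t) = K * dist (\<phi> (1 - (1 - s) / \<eta>\<^sup>2)) (\<phi> (1 - (1 - t) / \<eta>\<^sup>2))"
    using g s t K by (simp add: dist_real_def right_diff_distrib[symmetric] abs_mult)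
  also have "\<dots> \<le> K * (L * dist (1 - (1 - s) / \<eta>\<^sup>2) (1 - (1 - t) / \<eta>\<^sup>2))"
    using lipschitz_onD[OF lip range[OF s] range[OF t]] K by (rule mult_left_mono)
  also have "dist (1 - (1 - s) / \<eta>\<^sup>2) (1 - (1 - t) / \<eta>\<^sup>2) = dist s t / \<eta>\<^sup>2"
    using \<eta> by (simp add: dist_real_def abs_divide diff_divide_distrib[symmetric])
  finally show "dist (g s) (g t) \<le> K * L / \<eta>\<^sup>2 * dist s t"
    by simp
qed

lemma rescaled_kernel_lipschitz_bounded:
  fixes \<phi> g :: "real \<Rightarrow> real"
  assumes g: "\<forall>t\<in>{-1..1}. g t = K * \<phi> (1 - (1 - t) / \<eta>\<^sup>2)" and K: "0 \<le> K" and \<eta>: "0 < \<eta>" "\<eta> \<le> 1"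
    and \<phi>_cont: "continuous_on UNIV \<phi>" and \<phi>_supp: "\<forall>t. t \<notin> {-1..1} \<longrightarrow> \<phi> t = 0"
    and \<phi>_C3: "C3_on_interval \<phi>" and \<phi>_range: "\<forall>t. 0 \<le> \<phi> t \<and> \<phi> t \<le> 1"
  obtains L where "L-lipschitz_on {-1..1} g" "\<forall>t\<in>{-1..1}. 0 \<le> g t \<and> g t \<le> K"
proof -
  obtain L where lip: "L-lipschitz_on {-1..1} \<phi>"
    using \<phi>_C3 by (rule C3_on_interval_imp_lipschitz)
  \<comment> \<open>For \<eta> \<le> 1 the argument of \<phi> leaves [-1,1] to the left, where \<phi> vanishes.\<close>
  have "\<eta>\<^sup>2 \<le> 1"
    using \<eta> by (simp add: power_le_one)
  then have "1 - 2 / \<eta>\<^sup>2 \<le> -1"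
    using \<eta> by (simp add: field_simps)
  moreover have "\<forall>t < -1. \<phi> t = 0"
    using \<phi>_supp by simp
  ultimately have "L-lipschitz_on {1 - 2 / \<eta>\<^sup>2..1} \<phi>"
    using lipschitz_on_extend_by_zero_below[OF lip \<phi>_cont] by blast
  then have "(K * L / \<eta>\<^sup>2)-lipschitz_on {-1..1} g"
    by (rule lipschitz_on_rescaled_kernel[OF g K \<eta>(1)])
  moreover have "0 \<le> g t \<and> g t \<le> K" if "t \<in> {-1..1}" for t
    using g that K \<phi>_range[rule_format, of "1 - (1 - t) / \<eta>\<^sup>2"] by (simp add: mult_left_le)
  ultimately show ?thesis
    using that by blast
qed

section \<open>Composition with the radial profile\<close>

lemma locally_lipschitz_on_compact_imp_lipschitz:
  assumes "locally_lipschitz_on D f" "compact K" "K \<subseteq> D"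
  obtains L where "L-lipschitz_on K f"
proof -
  have "local_lipschitz {0::real} D (\<lambda>_. f)"
    using assms(1) unfolding local_lipschitz_def locally_lipschitz_on_def by (auto simp: less_imp_le) blast
  then have "local_lipschitz {0::real} K (\<lambda>_. f)"
    by (rule local_lipschitz_subset) (use assms in auto)
  then obtain L where "\<And>t. t \<in> {0::real} \<Longrightarrow> L-lipschitz_on K f"
    by (rule local_lipschitz_compact_implies_lipschitz[OF _ assms(2)]) auto
  then show ?thesis
    using that by auto
qed

lemma norm_scaleR_sphere_diff_le:
  fixes z1 z2 :: "'a::real_normed_vector"
  assumes lip: "La-lipschitz_on (I \<times> sphere 0 1) (\<lambda>(l, z). \<alpha> l z)"
    and bound: "\<forall>l\<in>I. \<forall>z\<in>sphere 0 1. \<bar>\<alpha> l z\<bar> \<le> B"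
    and l1: "l1 \<in> I" and l2: "l2 \<in> I" and z1: "z1 \<in> sphere 0 1" and z2: "z2 \<in> sphere 0 1"
  shows "norm (\<alpha> l1 z1 *\<^sub>R z1 - \<alpha> l2 z2 *\<^sub>R z2) \<le> (La + B) * (\<bar>l1 - l2\<bar> + norm (z1 - z2))"
proof -
  let ?\<delta> = "\<bar>l1 - l2\<bar> + norm (z1 - z2)"
  have "\<bar>\<alpha> l1 z1 - \<alpha> l2 z2\<bar> \<le> La * dist (l1, z1) (l2, z2)"
    using lipschitz_onD[OF lip] l1 l2 z1 z2 by (force simp: dist_real_def)
  also have "dist (l1, z1) (l2, z2) \<le> ?\<delta>"
    unfolding dist_Pair_Pair dist_real_def
    using sqrt_sum_squares_le_sum_abs[of "l1 - l2" "norm (z1 - z2)"] by (simp add: dist_norm)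
  finally have \<alpha>_diff: "\<bar>\<alpha> l1 z1 - \<alpha> l2 z2\<bar> \<le> La * ?\<delta>"
    using lipschitz_on_nonneg[OF lip] by (simp add: mult_left_mono order_trans)
  have "\<bar>\<alpha> l2 z2\<bar> \<le> B"
    using bound l2 z2 by blast
  then have \<alpha>_bound: "\<bar>\<alpha> l2 z2\<bar> * norm (z1 - z2) \<le> B * ?\<delta>"
    by (intro mult_mono) auto
  have "\<alpha> l1 z1 *\<^sub>R z1 - \<alpha> l2 z2 *\<^sub>R z2 = (\<alpha> l1 z1 - \<alpha> l2 z2) *\<^sub>R z1 + \<alpha> l2 z2 *\<^sub>R (z1 - z2)"
    by (simp add: algebra_simps)
  then have "norm (\<alpha> l1 z1 *\<^sub>R z1 - \<alpha> l2 z2 *\<^sub>R z2) \<le> \<bar>\<alpha> l1 z1 - \<alpha> l2 z2\<bar> + \<bar>\<alpha> l2 z2\<bar> * norm (z1 - z2)"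
    using norm_triangle_ineq[of "(\<alpha> l1 z1 - \<alpha> l2 z2) *\<^sub>R z1" "\<alpha> l2 z2 *\<^sub>R (z1 - z2)"] z1
    by simp
  with \<alpha>_diff \<alpha>_bound show ?thesis
    by (simp add: distrib_right)
qed

lemma lipschitz_scaleR_sphere_compose:
  fixes F :: "'b \<Rightarrow> 'a::real_normed_vector \<Rightarrow> real"
  assumes F_range: "\<forall>x\<in>X. \<forall>z\<in>sphere 0 1. F x z \<in> I"
    and F_lip: "\<forall>x1\<in>X. \<forall>x2\<in>X. \<forall>z1\<in>sphere 0 1. \<forall>z2\<in>sphere 0 1.
                  \<bar>F x1 z1 - F x2 z2\<bar> \<le> C * (D x1 x2 + norm (z1 - z2))"
    and D_nonneg: "\<forall>x1\<in>X. \<forall>x2\<in>X. 0 \<le> D x1 x2"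
    and \<alpha>_lip: "La-lipschitz_on (I \<times> sphere 0 1) (\<lambda>(l, z). \<alpha> l z)"
    and \<alpha>_bound: "\<forall>l\<in>I. \<forall>z\<in>sphere 0 1. \<bar>\<alpha> l z\<bar> \<le> B"
  shows "\<exists>L. \<forall>x1\<in>X. \<forall>x2\<in>X. \<forall>z1\<in>sphere 0 1. \<forall>z2\<in>sphere 0 1.
           norm (\<alpha> (F x1 z1) z1 *\<^sub>R z1 - \<alpha> (F x2 z2) z2 *\<^sub>R z2) \<le> L * (D x1 x2 + norm (z1 - z2))"
proof (intro exI[of _ "(La + B) * (max C 0 + 1)"] ballI)
  fix x1 x2 :: 'b and z1 z2 :: 'a
  assume x: "x1 \<in> X" "x2 \<in> X" and z: "z1 \<in> sphere 0 1" "z2 \<in> sphere 0 1"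
  let ?\<delta> = "D x1 x2 + norm (z1 - z2)"
  have "\<bar>\<alpha> (F x1 z1) z1\<bar> \<le> B"
    using \<alpha>_bound F_range x(1) z(1) by blast
  then have "0 \<le> La + B"
    using lipschitz_on_nonneg[OF \<alpha>_lip] by linarith
  have "0 \<le> D x1 x2"
    using D_nonneg x by blast
  then have "0 \<le> ?\<delta>"
    by simp
  have "\<bar>F x1 z1 - F x2 z2\<bar> \<le> C * ?\<delta>"
    using F_lip x z by blast
  also have "\<dots> \<le> max C 0 * ?\<delta>"
    using \<open>0 \<le> ?\<delta>\<close> by (intro mult_right_mono) auto
  finally have F_diff: "\<bar>F x1 z1 - F x2 z2\<bar> + norm (z1 - z2) \<le> (max C 0 + 1) * ?\<delta>"
    using \<open>0 \<le> D x1 x2\<close> by (simp add: distrib_right)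
  have "norm (\<alpha> (F x1 z1) z1 *\<^sub>R z1 - \<alpha> (F x2 z2) z2 *\<^sub>R z2)
      \<le> (La + B) * (\<bar>F x1 z1 - F x2 z2\<bar> + norm (z1 - z2))"
    using F_range x z by (intro norm_scaleR_sphere_diff_le[OF \<alpha>_lip \<alpha>_bound]) auto
  also have "\<dots> \<le> (La + B) * ((max C 0 + 1) * ?\<delta>)"
    using \<open>0 \<le> La + B\<close> by (rule mult_left_mono[OF F_diff])
  finally show "norm (\<alpha> (F x1 z1) z1 *\<^sub>R z1 - \<alpha> (F x2 z2) z2 *\<^sub>R z2) \<le> (La + B) * (max C 0 + 1) * ?\<delta>"
    by (simp only: mult.assoc)
qed

theorem proposition4p2:
  fixes \<eta>0 c :: real and \<phi> g :: "real \<Rightarrow> real"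
    and \<alpha> :: "real \<Rightarrow> 'a::euclidean_space \<Rightarrow> real"
    and a :: real
  assumes dim: "DIM('a) \<ge> 2"
    and eta0: "0 < \<eta>0" "\<eta>0 < 1"
    and phi_nonneg: "\<forall>t. 0 \<le> \<phi> t"
    and phi_cont: "continuous_on UNIV \<phi>"
    and phi_supp: "\<forall>t. t \<notin> {-1..1} \<longrightarrow> \<phi> t = 0"
    and phi_C3: "C3_on_interval \<phi>"
    and phi_sup: "(\<forall>t. \<bar>\<phi> t\<bar> \<le> 1) \<and> (\<exists>t. \<bar>\<phi> t\<bar> = 1)"
    and c_pos: "c > 0"
    and g_def: "\<forall>t\<in>{-1..1}. g t = c / sphere_area (DIM('a) - 1) * \<eta>0 powr (- real (DIM('a) - 1))
                                   * \<phi> (1 - (1 - t) / \<eta>0\<^sup>2)"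
    and normalized: "\<forall>z\<in>sphere (0::'a) 1. sph_star (\<lambda>_. 1) g z = 1"
    and alpha_lip: "locally_lipschitz_on ({0<..} \<times> sphere (0::'a) 1) (\<lambda>(l, z). \<alpha> l z)"
    and alpha_bounds: "\<forall>l>0. \<forall>z\<in>sphere (0::'a) 1. 0 \<le> \<alpha> l z \<and> \<alpha> l z < l"
    and a: "0 < a" "a < 1"
  shows "\<exists>L. \<forall>r1\<in>A2 a. \<forall>r2\<in>A2 a. \<forall>z1\<in>sphere (0::'a) 1. \<forall>z2\<in>sphere 0 1.
           norm (\<alpha> (sph_star r1 g z1) z1 *\<^sub>R z1 - \<alpha> (sph_star r2 g z2) z2 *\<^sub>R z2)
             \<le> L * (l2norm_sph (\<lambda>\<theta>. r1 \<theta> - r2 \<theta>) + norm (z1 - z2))"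
proof -
  let ?S = "sphere (0::'a) 1" and ?s = "sqrt (omega_sph TYPE('a))"
  define K where "K = c / sphere_area (DIM('a) - 1) * \<eta>0 powr (- real (DIM('a) - 1))"
  have "0 \<le> K"
    unfolding K_def using c_pos sphere_area_pos[of "DIM('a) - 1"] dim by simp
  then obtain Lg where g_lip: "Lg-lipschitz_on {-1..1} g" and g_range: "\<forall>t\<in>{-1..1}. 0 \<le> g t \<and> g t \<le> K"
    using g_def eta0 phi_cont phi_supp phi_C3 phi_nonneg phi_sup
    by (elim rescaled_kernel_lipschitz_bounded[where \<phi> = \<phi> and \<eta> = \<eta>0]) (auto simp: K_def abs_le_iff)
  define M where "M = K / (a * ?s)"
  have star_range: "\<forall>r\<in>A2 a. \<forall>z\<in>?S. sph_star r g z \<in> {a..M}"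
    unfolding M_def using normalized
    by (intro ballI sph_star_A2_bounds[OF a(1) lipschitz_on_continuous_on[OF g_lip] g_range]) auto
  have star_lip: "\<forall>r1\<in>A2 a. \<forall>r2\<in>A2 a. \<forall>z1\<in>?S. \<forall>z2\<in>?S. \<bar>sph_star r1 g z1 - sph_star r2 g z2\<bar>
      \<le> (K + Lg / a) / ?s * (l2norm_sph (\<lambda>\<theta>. r1 \<theta> - r2 \<theta>) + norm (z1 - z2))"
    using g_range by (intro ballI sph_star_A2_lipschitz[OF a(1) g_lip]) auto
  obtain L\<alpha> where \<alpha>_lip: "L\<alpha>-lipschitz_on ({a..M} \<times> ?S) (\<lambda>(l, z). \<alpha> l z)"
    by (rule locally_lipschitz_on_compact_imp_lipschitz[OF alpha_lip compact_Times[OF compact_Icc compact_sphere]])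
      (use a in auto)
  have \<alpha>_bound: "\<forall>l\<in>{a..M}. \<forall>z\<in>?S. \<bar>\<alpha> l z\<bar> \<le> M"
  proof (intro ballI)
    fix l z
    assume "l \<in> {a..M}" "z \<in> ?S"
    then show "\<bar>\<alpha> l z\<bar> \<le> M"
      using alpha_bounds[rule_format, of l z] a by auto
  qed
  show ?thesis
    by (rule lipschitz_scaleR_sphere_compose[OF star_range star_lip _ \<alpha>_lip \<alpha>_bound])
      (simp add: l2norm_sph_def)
qed

end
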